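(* Let $\alpha_a$ be a labeled dGL hybrid game and $\varphi$ a formula, and let $M$ be the model predictive Angelic subvalue map for $\alpha_a$ and $\varphi$. Then $\models\langle\mathcal{P}(\alpha_a,M)\rangle\varphi\leftrightarrow\langle\alpha\rangle\varphi$. Dually, if $M'$ is the model predictive Demonic subvalue map for $\alpha_a$ and $\varphi$, then $\models[\mathcal{D}(\alpha_a,M')]\varphi\leftrightarrow[\alpha]\varphi$.
   Context: Differential game logic (dGL). Hybrid games are generated by $\alpha,\beta ::= x:=e \mid \alpha;\beta \mid ?Q \mid \{x'=f(x)\,\&\,Q\} \mid \alpha^{*} \mid \alpha\cup\beta \mid x:=* \mid\ !Q \mid \{x'=f(x)\,\&\,Q\}^{d} \mid \alpha^{\times} \mid \alpha\cap\beta \mid x:=\otimes$, with $x$ a real variable (vector for ODEs), $e,f(x)$ polynomial terms, $Q$ a formula. Players Angel and Demon: $x:=e$ deterministic assignment; in $x:=*$ Angel (in $x:=\otimes$ Demon) assigns any real; in $\{x'=f(x)\&Q\}$ Angel (in $\{\cdot\}^d$ Demon) chooses a duration $r\ge 0$ of following the ODE with $Q$ true throughout; $?Q$ makes Angel lose and $!Q$ makes Demon lose if $Q$ is false; in $\alpha\cup\beta$ Angel (in $\alpha\cap\beta$ Demon) chooses the branch; in $\alpha^*$ Angel (in $\alpha^\times$ Demon) decides before each iteration whether to repeat or stop; $\alpha;\beta$ sequential. Formulas: polynomial (in)equalities closed under connectives, real quantifiers, and modalities $\langle\alpha\rangle\varphi$ (Angel can win $\alpha$ reaching $\varphi$) and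 $[\alpha]\varphi\equiv\neg\langle\alpha\rangle\neg\varphi$, with the standard dGL winning-region semantics ($\langle x:=*\rangle\varphi\leftrightarrow\exists x\varphi$, $\langle x:=\otimes\rangle\varphi\leftrightarrow\forall x\varphi$, $\langle ?Q\rangle\varphi\leftrightarrow Q\wedge\varphi$, $\langle !Q\rangle\varphi\leftrightarrow(Q\rightarrow\varphi)$, $\cup$ as disjunction, $\cap$ as conjunction, $\langle\alpha;\beta\rangle\varphi\leftrightarrow\langle\alpha\rangle\langle\beta\rangle\varphi$, Angel ODE existential, Demon ODE universal, $\langle\alpha^*\rangle$ least and $\langle\alpha^\times\rangle$ greatest fixed point). $\models$ denotes validity. Labels: every node of the syntax tree carries a unique label; $\alpha_a$ has root label $a$; $\mathrm{nodes}(\alpha_a)$ is its set of subgame labels; $\mathsf{end}$ is a special extra label. A map $S$ assigns formulas to a label set containing $\mathrm{nodes}(\alpha_a)\cup\{\mathsf{end}\}$; $S\{\mathsf{end}\mapsto Q\}$ replaces the value at $\mathsf{end}$. $\gamma_g,\delta_d$ denote immediate subgames with root labels $g,d$. Game suffix: $\mathrm{suffix}_a(\alpha_a)=\alpha_a$; for $b\ne a$: for loops $((\gamma_g)^* )_a,((\gamma_g)^\times)_a$ it is $\mathrm{suffix}_b(\gamma_g);\alpha_a$; for $\cup,\cap$ the suffix within the branch containing $b$; for $(\gamma_g;\delta_d)_a$ it is $\mathrm{suffix}_b(\gamma_g);\delta_d$ if $b\in\mathrm{nodes}(\gamma_g)$ else $\mathrm{suffix}_b(\delta_d)$. Model predictive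 Angelic subvalue map for $\alpha_a$ and $\varphi$: $M(\mathsf{end})=\varphi$ and $M(b)=\langle\mathrm{suffix}_b(\alpha_a)\rangle\varphi$ for $b\in\mathrm{nodes}(\alpha_a)$. Model predictive Demonic subvalue map: $M'(\mathsf{end})=\varphi$ and $M'(b)=[\mathrm{suffix}_b(\alpha_a)]\varphi$. Angelic existential projection $\mathcal{P}(\alpha_a,S)$: $(x:=* )_a\mapsto(x:=* )_a;?S(\mathsf{end})$; Angel ODE $\mapsto$ ODE$;?S(\mathsf{end})$; $(\gamma_g\cup\delta_d)_a\mapsto(?S(g);\mathcal{P}(\gamma_g,S))\cup(?S(d);\mathcal{P}(\delta_d,S))$; $((\gamma_g)^* )_a\mapsto(?S(g);\mathcal{P}(\gamma_g,S\{\mathsf{end}\mapsto S(a)\}))^*;?S(\mathsf{end})$; $(\gamma_g;\delta_d)_a\mapsto\mathcal{P}(\gamma_g,S\{\mathsf{end}\mapsto S(d)\});\mathcal{P}(\delta_d,S)$; $\cap\mapsto\mathcal{P}(\gamma_g,S)\cap\mathcal{P}(\delta_d,S)$; $((\gamma_g)^\times)_a\mapsto\mathcal{P}(\gamma_g,S\{\mathsf{end}\mapsto S(a)\})^\times$; $x:=e,x:=\otimes,?Q,!Q$, Demon ODE unchanged (labels preserved, new nodes fresh labels). Demonic existential projection $\mathcal{D}(\alpha_a,S)$: $(x:=\otimes)_a\mapsto(x:=\otimes)_a;!S(\mathsf{end})$; Demon ODE $\mapsto$ ODE$^d;!S(\mathsf{end})$; $(\gamma_g\cap\delta_d)_a\mapsto(!S(g);\mathcal{D}(\gamma_g,S))\cap(!S(d);\mathcal{D}(\delta_d,S))$;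 $((\gamma_g)^\times)_a\mapsto(!S(g);\mathcal{D}(\gamma_g,S\{\mathsf{end}\mapsto S(g)\vee S(\mathsf{end})\}))^\times;!S(\mathsf{end})$; $(\gamma_g;\delta_d)_a\mapsto\mathcal{D}(\gamma_g,S\{\mathsf{end}\mapsto S(d)\});\mathcal{D}(\delta_d,S)$; $\cup\mapsto\mathcal{D}(\gamma_g,S)\cup\mathcal{D}(\delta_d,S)$; $((\gamma_g)^* )_a\mapsto\mathcal{D}(\gamma_g,S\{\mathsf{end}\mapsto S(a)\})^*$; $x:=e,x:=*,?Q,!Q$, Angel ODE unchanged. *)

theory Defs
  imports "HOL-Analysis.Analysis"
begin

type_synonym var = nat
type_synonym lab = nat
type_synonym state = "var \<Rightarrow> real"

datatype trm = Var var | Const real | Plus trm trm | Times trm trm | Neg trm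

datatype fml =
    Geq trm trm | Gt trm trm | Equal trm trm
  | Not fml | And fml fml | Or fml fml | Imp fml fml | Iff fml fml
  | Exists var fml | Forall var fml
  | Dia game fml
and game =
    Assign lab var trm
  | AssignAny lab var
  | Test lab fml
  | ODE lab "(var \<times> trm) list" fml
  | Choice lab game game
  | Seq lab game game
  | Loop lab game
  | AssignDemon lab var
  | Assert lab fml
  | DODE lab "(var \<times> trm) list" fml
  | DChoice lab game game
  | DLoop lab game

definition Box :: "game \<Rightarrow> fml \<Rightarrow> fml" where
  "Box a p = Not (Dia a (Not p))"

primrec trm_sem :: "trm \<Rightarrow> state \<Rightarrow> real" where
  "trm_sem (Var x) \<omega> = \<omega> x"
| "trm_sem (Const c) \<omega> = c"
| "trm_sem (Plus e1 e2) \<omega> = trm_sem e1 \<omega> + trm_sem e2 \<omega>"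
| "trm_sem (Times e1 e2) \<omega> = trm_sem e1 \<omega> * trm_sem e2 \<omega>"
| "trm_sem (Neg e) \<omega> = - trm_sem e \<omega>"

definition sol :: "(var \<times> trm) list \<Rightarrow> state set \<Rightarrow> state \<Rightarrow> real \<Rightarrow> (real \<Rightarrow> state) \<Rightarrow> bool" where
  "sol xs Q \<omega> r \<phi> \<longleftrightarrow> r \<ge> 0 \<and> \<phi> 0 = \<omega> \<and>
     (\<forall>t\<in>{0..r}. \<phi> t \<in> Q
        \<and> (\<forall>y. y \<notin> fst ` set xs \<longrightarrow> \<phi> t y = \<omega> y)
        \<and> (\<forall>(x,e)\<in>set xs. ((\<lambda>s. \<phi> s x) has_real_derivative trm_sem e (\<phi> t)) (at t within {0..r})))"

text \<open>Formula semantics and winding-region semantics of games: \<open>game_sem a X\<close> is the set of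
  states from which Angel has a winning strategy in \<open>a\<close> to reach \<open>X\<close>.\<close>
primrec fml_sem :: "fml \<Rightarrow> state set" and game_sem :: "game \<Rightarrow> state set \<Rightarrow> state set" where
  "fml_sem (Geq e1 e2) = {\<omega>. trm_sem e1 \<omega> \<ge> trm_sem e2 \<omega>}"
| "fml_sem (Gt e1 e2) = {\<omega>. trm_sem e1 \<omega> > trm_sem e2 \<omega>}"
| "fml_sem (Equal e1 e2) = {\<omega>. trm_sem e1 \<omega> = trm_sem e2 \<omega>}"
| "fml_sem (Not p) = - fml_sem p"
| "fml_sem (And p q) = fml_sem p \<inter> fml_sem q"
| "fml_sem (Or p q) = fml_sem p \<union> fml_sem q"
| "fml_sem (Imp p q) = - fml_sem p \<union> fml_sem q"
| "fml_sem (Iff p q) = {\<omega>. \<omega> \<in> fml_sem p \<longleftrightarrow> \<omega> \<in> fml_sem q}"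
| "fml_sem (Exists x p) = {\<omega>. \<exists>r. fun_upd \<omega> x r \<in> fml_sem p}"
| "fml_sem (Forall x p) = {\<omega>. \<forall>r. fun_upd \<omega> x r \<in> fml_sem p}"
| "fml_sem (Dia a p) = game_sem a (fml_sem p)"
| "game_sem (Assign l x e) X = {\<omega>. fun_upd \<omega> x (trm_sem e \<omega>) \<in> X}"
| "game_sem (AssignAny l x) X = {\<omega>. \<exists>r. fun_upd \<omega> x r \<in> X}"
| "game_sem (Test l q) X = fml_sem q \<inter> X"
| "game_sem (ODE l xs q) X = {\<omega>. \<exists>r \<phi>. sol xs (fml_sem q) \<omega> r \<phi> \<and> \<phi> r \<in> X}"
| "game_sem (Choice l a b) X = game_sem a X \<union> game_sem b X"
| "game_sem (Seq l a b) X = game_sem a (game_sem b X)"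
| "game_sem (Loop l a) X = lfp (\<lambda>Z. X \<union> game_sem a Z)"
| "game_sem (AssignDemon l x) X = {\<omega>. \<forall>r. fun_upd \<omega> x r \<in> X}"
| "game_sem (Assert l q) X = - fml_sem q \<union> X"
| "game_sem (DODE l xs q) X = {\<omega>. \<forall>r \<phi>. sol xs (fml_sem q) \<omega> r \<phi> \<longrightarrow> \<phi> r \<in> X}"
| "game_sem (DChoice l a b) X = game_sem a X \<inter> game_sem b X"
| "game_sem (DLoop l a) X = gfp (\<lambda>Z. X \<inter> game_sem a Z)"

definition valid :: "fml \<Rightarrow> bool" where
  "valid p \<longleftrightarrow> fml_sem p = UNIV"

datatype lbl = L lab | End

primrec root :: "game \<Rightarrow> lab" where
  "root (Assign l x e) = l" | "root (AssignAny l x) = l" | "root (Test l q) = l"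
| "root (ODE l xs q) = l" | "root (Choice l a b) = l" | "root (Seq l a b) = l"
| "root (Loop l a) = l" | "root (AssignDemon l x) = l" | "root (Assert l q) = l"
| "root (DODE l xs q) = l" | "root (DChoice l a b) = l" | "root (DLoop l a) = l"

text \<open>Labels of all subgame nodes of the game syntax tree (as a list, to express uniqueness).\<close>
primrec nodes :: "game \<Rightarrow> lab list" where
  "nodes (Assign l x e) = [l]" | "nodes (AssignAny l x) = [l]" | "nodes (Test l q) = [l]"
| "nodes (ODE l xs q) = [l]" | "nodes (Choice l a b) = l # nodes a @ nodes b"
| "nodes (Seq l a b) = l # nodes a @ nodes b"
| "nodes (Loop l a) = l # nodes a" | "nodes (AssignDemon l x) = [l]" | "nodes (Assert l q) = [l]"
| "nodes (DODE l xs q) = [l]" | "nodes (DChoice l a b) = l # nodes a @ nodes b"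
| "nodes (DLoop l a) = l # nodes a"

text \<open>Game suffix \<open>suffix b a\<close> (meaningful for \<open>b \<in> nodes a\<close>). The labels of the new sequential
  composition nodes it creates are irrelevant (suffixes only occur inside formulas); we reuse
  the root label.\<close>
primrec suffix :: "lab \<Rightarrow> game \<Rightarrow> game" where
  "suffix b (Assign l x e) = Assign l x e"
| "suffix b (AssignAny l x) = AssignAny l x"
| "suffix b (Test l q) = Test l q"
| "suffix b (ODE l xs q) = ODE l xs q"
| "suffix b (Choice l g d) = (if b = l then Choice l g d
     else if b \<in> set (nodes g) then suffix b g else suffix b d)"
| "suffix b (Seq l g d) = (if b = l then Seq l g d
     else if b \<in> set (nodes g) then Seq l (suffix b g) d else suffix b d)"
| "suffix b (Loop l g) = (if b = l then Loop l g else Seq l (suffix b g) (Loop l g))"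
| "suffix b (AssignDemon l x) = AssignDemon l x"
| "suffix b (Assert l q) = Assert l q"
| "suffix b (DODE l xs q) = DODE l xs q"
| "suffix b (DChoice l g d) = (if b = l then DChoice l g d
     else if b \<in> set (nodes g) then suffix b g else suffix b d)"
| "suffix b (DLoop l g) = (if b = l then DLoop l g else Seq l (suffix b g) (DLoop l g))"

fun angel_mp :: "game \<Rightarrow> fml \<Rightarrow> lbl \<Rightarrow> fml" where
  "angel_mp a p End = p"
| "angel_mp a p (L b) = Dia (suffix b a) p"

fun demon_mp :: "game \<Rightarrow> fml \<Rightarrow> lbl \<Rightarrow> fml" where
  "demon_mp a p End = p"
| "demon_mp a p (L b) = Box (suffix b a) p"

text \<open>\<open>nl a k\<close> provides the (fresh) label of the \<open>k\<close>-th new node created when projecting the node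
  labeled \<open>a\<close>; original labels are preserved.\<close>
primrec aproj :: "(lab \<Rightarrow> nat \<Rightarrow> lab) \<Rightarrow> game \<Rightarrow> (lbl \<Rightarrow> fml) \<Rightarrow> game" where
  "aproj nl (Assign l x e) S = Assign l x e"
| "aproj nl (AssignAny l x) S = Seq (nl l 0) (AssignAny l x) (Test (nl l 1) (S End))"
| "aproj nl (Test l q) S = Test l q"
| "aproj nl (ODE l xs q) S = Seq (nl l 0) (ODE l xs q) (Test (nl l 1) (S End))"
| "aproj nl (Choice l g d) S =
     Choice l (Seq (nl l 0) (Test (nl l 1) (S (L (root g)))) (aproj nl g S))
              (Seq (nl l 2) (Test (nl l 3) (S (L (root d)))) (aproj nl d S))"
| "aproj nl (Seq l g d) S = Seq l (aproj nl g (S(End := S (L (root d))))) (aproj nl d S)"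
| "aproj nl (Loop l g) S =
     Seq (nl l 0)
       (Loop l (Seq (nl l 1) (Test (nl l 2) (S (L (root g)))) (aproj nl g (S(End := S (L l))))))
       (Test (nl l 3) (S End))"
| "aproj nl (AssignDemon l x) S = AssignDemon l x"
| "aproj nl (Assert l q) S = Assert l q"
| "aproj nl (DODE l xs q) S = DODE l xs q"
| "aproj nl (DChoice l g d) S = DChoice l (aproj nl g S) (aproj nl d S)"
| "aproj nl (DLoop l g) S = DLoop l (aproj nl g (S(End := S (L l))))"

primrec dproj :: "(lab \<Rightarrow> nat \<Rightarrow> lab) \<Rightarrow> game \<Rightarrow> (lbl \<Rightarrow> fml) \<Rightarrow> game" where
  "dproj nl (Assign l x e) S = Assign l x e"
| "dproj nl (AssignAny l x) S = AssignAny l x"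
| "dproj nl (Test l q) S = Test l q"
| "dproj nl (ODE l xs q) S = ODE l xs q"
| "dproj nl (Choice l g d) S = Choice l (dproj nl g S) (dproj nl d S)"
| "dproj nl (Seq l g d) S = Seq l (dproj nl g (S(End := S (L (root d))))) (dproj nl d S)"
| "dproj nl (Loop l g) S = Loop l (dproj nl g (S(End := S (L l))))"
| "dproj nl (AssignDemon l x) S = Seq (nl l 0) (AssignDemon l x) (Assert (nl l 1) (S End))"
| "dproj nl (Assert l q) S = Assert l q"
| "dproj nl (DODE l xs q) S = Seq (nl l 0) (DODE l xs q) (Assert (nl l 1) (S End))"
| "dproj nl (DChoice l g d) S =
     DChoice l (Seq (nl l 0) (Assert (nl l 1) (S (L (root g)))) (dproj nl g S))
               (Seq (nl l 2) (Assert (nl l 3) (S (L (root d)))) (dproj nl d S))"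
| "dproj nl (DLoop l g) S =
     Seq (nl l 0)
       (DLoop l (Seq (nl l 1) (Assert (nl l 2) (S (L (root g))))
                    (dproj nl g (S(End := Or (S (L (root g))) (S End))))))
       (Assert (nl l 3) (S End))"

end

(*
  Projection only inserts tests ?S(b) for Angel (assertions !S(b) for Demon), so it can only
  shrink Angel's (enlarge Demon's) winning region. Conversely, if every S(b) denotes the value
  of the rest of the game from b on, a winning strategy never fails a test, so nothing is lost.
  This holds by induction on the game for every such map S, not just the model predictive one;
  at a loop it is a fixpoint induction in which the body only has to be simulated inside the
  loop's own winning region, and that region is what the test S(a) certifies.
  Labels carry no semantics.
*)
theory Submission
  imports Defs
begin

lemma game_sem_mono: "X \<subseteq> Y \<Longrightarrow> game_sem a X \<subseteq> game_sem a Y"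
proof (induction a arbitrary: X Y rule: game.induct[of "\<lambda>_. True"])
  case (Loop l g) then show ?case by simp (rule lfp_mono, blast)
next
  case (DLoop l g) then show ?case by simp (rule gfp_mono, blast)
qed (simp; blast)+

lemma mono_game_sem: "mono (game_sem a)"
  by (rule monoI) (rule game_sem_mono)

lemma lfp_mono_guarded:
  fixes f h :: "'a set \<Rightarrow> 'a set" and E :: "'a set"
  defines "W \<equiv> lfp (\<lambda>Z. E \<union> f Z)"
  assumes "mono f" and "mono h" and "X \<subseteq> E" and "\<And>Z. f (Z \<inter> W) \<subseteq> h Z"
  shows "lfp (\<lambda>Z. X \<union> f Z) \<subseteq> lfp (\<lambda>Z. X \<union> (f W \<inter> h Z))"
proof (rule lfp_induct)
  let ?T = "lfp (\<lambda>Z. X \<union> (f W \<inter> h Z))"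
  show "mono (\<lambda>Z. X \<union> f Z)"
    using assms(2) by (auto intro!: monoI dest: monoD)
  have T_unfold: "?T = X \<union> (f W \<inter> h ?T)"
    by (rule lfp_unfold) (use assms(3) in \<open>auto intro!: monoI dest: monoD\<close>)
  have "lfp (\<lambda>Z. X \<union> f Z) \<subseteq> W"
    unfolding W_def by (rule lfp_mono) (use assms(4) in blast)
  then have "f (lfp (\<lambda>Z. X \<union> f Z) \<inter> ?T) \<subseteq> f (?T \<inter> W)"
    and "f (lfp (\<lambda>Z. X \<union> f Z) \<inter> ?T) \<subseteq> f W"
    by (intro monoD[OF assms(2)]; blast)+
  with assms(5)[of ?T] T_unfold show "X \<union> f (lfp (\<lambda>Z. X \<union> f Z) \<inter> ?T) \<subseteq> ?T"
    by blast
qed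

lemma gfp_mono_relative:
  fixes f h :: "'a set \<Rightarrow> 'a set" and E :: "'a set"
  defines "W \<equiv> gfp (\<lambda>Z. E \<inter> f Z)"
  assumes "mono f" and "X \<subseteq> Y" and "X \<subseteq> E" and "\<And>Z. f (Z \<inter> W) \<subseteq> h Z"
  shows "gfp (\<lambda>Z. X \<inter> f Z) \<subseteq> gfp (\<lambda>Z. Y \<inter> h Z)"
proof (rule gfp_upperbound)
  let ?G = "gfp (\<lambda>Z. X \<inter> f Z)"
  have G_unfold: "?G = X \<inter> f ?G"
    by (rule gfp_unfold) (use assms(2) in \<open>auto intro!: monoI dest: monoD\<close>)
  have "?G \<subseteq> W"
    unfolding W_def by (rule gfp_mono) (use assms(4) in blast)
  then have "f ?G \<subseteq> h ?G"
    using assms(5)[of ?G] by (simp add: Int_absorb2)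
  with G_unfold assms(3) show "?G \<subseteq> Y \<inter> h ?G"
    by blast
qed

lemma lfp_mono_relative:
  fixes f h :: "'a set \<Rightarrow> 'a set" and N :: "'a set"
  defines "W \<equiv> lfp (\<lambda>Z. N \<union> f Z)"
  assumes "mono f" and "Y \<subseteq> X" and "N \<subseteq> X" and "\<And>Z. h Z \<subseteq> f (Z \<union> W)"
  shows "lfp (\<lambda>Z. Y \<union> h Z) \<subseteq> lfp (\<lambda>Z. X \<union> f Z)"
proof (rule lfp_lowerbound)
  let ?T = "lfp (\<lambda>Z. X \<union> f Z)"
  have T_unfold: "?T = X \<union> f ?T"
    by (rule lfp_unfold) (use assms(2) in \<open>auto intro!: monoI dest: monoD\<close>)
  have "W \<subseteq> ?T"
    unfolding W_def by (rule lfp_mono) (use assms(4) in blast)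
  then have "h ?T \<subseteq> f ?T"
    using assms(5)[of ?T] by (simp add: Un_absorb2)
  with T_unfold assms(3) show "Y \<union> h ?T \<subseteq> ?T"
    by blast
qed

lemma gfp_mono_guarded:
  fixes f h :: "'a set \<Rightarrow> 'a set" and N :: "'a set"
  defines "W \<equiv> gfp (\<lambda>Z. N \<inter> f Z)"
  assumes "mono f" and "mono h" and "N \<subseteq> X" and "\<And>Z. h Z \<subseteq> f (Z \<union> W)"
  shows "gfp (\<lambda>Z. X \<inter> (f W \<union> h Z)) \<subseteq> gfp (\<lambda>Z. X \<inter> f Z)"
proof (rule coinduct)
  let ?G = "gfp (\<lambda>Z. X \<inter> (f W \<union> h Z))" and ?T = "gfp (\<lambda>Z. X \<inter> f Z)"
  show "mono (\<lambda>Z. X \<inter> f Z)"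
    using assms(2) by (auto intro!: monoI dest: monoD)
  have G_unfold: "?G = X \<inter> (f W \<union> h ?G)"
    by (rule gfp_unfold) (use assms(3) in \<open>auto intro!: monoI dest: monoD\<close>)
  have "W \<subseteq> ?T"
    unfolding W_def by (rule gfp_mono) (use assms(4) in blast)
  then have "f W \<subseteq> f (?G \<union> ?T)" and "f (?G \<union> W) \<subseteq> f (?G \<union> ?T)"
    by (intro monoD[OF assms(2)]; blast)+
  with assms(5)[of ?G] G_unfold show "?G \<subseteq> X \<inter> f (?G \<union> ?T)"
    by blast
qed

lemma root_in_nodes: "root g \<in> set (nodes g)"
  by (cases g) auto

lemma suffix_root: "suffix (root g) g = g"
  by (cases g) auto

definition demon_sem :: "game \<Rightarrow> state set \<Rightarrow> state set" where
  "demon_sem a X = - game_sem a (- X)"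

lemma fml_sem_Box: "fml_sem (Box a p) = demon_sem a (fml_sem p)"
  by (simp add: Box_def demon_sem_def)

lemma demon_sem_Seq: "demon_sem (Seq l a b) X = demon_sem a (demon_sem b X)"
  by (simp add: demon_sem_def)

(* v is the value transformer of the player: game_sem for Angel, demon_sem for Demon. *)
definition subvalue_map ::
    "(game \<Rightarrow> state set \<Rightarrow> state set) \<Rightarrow> game \<Rightarrow> (lbl \<Rightarrow> fml) \<Rightarrow> bool" where
  "subvalue_map v g S \<longleftrightarrow>
     (\<forall>b \<in> set (nodes g). fml_sem (S (L b)) = v (suffix b g) (fml_sem (S End)))"

lemma subvalue_map_root:
  "subvalue_map v g S \<Longrightarrow> fml_sem (S (L (root g))) = v g (fml_sem (S End))"
  using root_in_nodes[of g] by (simp add: subvalue_map_def suffix_root)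

lemma subvalue_map_Choice:
  assumes "distinct (nodes (Choice l g d))" and "subvalue_map v (Choice l g d) S"
  shows "subvalue_map v g S" and "subvalue_map v d S"
  using assms by (auto simp: subvalue_map_def)

lemma subvalue_map_DChoice:
  assumes "distinct (nodes (DChoice l g d))" and "subvalue_map v (DChoice l g d) S"
  shows "subvalue_map v g S" and "subvalue_map v d S"
  using assms by (auto simp: subvalue_map_def)

lemma subvalue_map_Seq:
  assumes seq: "\<And>l a b X. v (Seq l a b) X = v a (v b X)"
    and "distinct (nodes (Seq l g d))" and "subvalue_map v (Seq l g d) S"
  shows "subvalue_map v g (S(End := S (L (root d))))" and "subvalue_map v d S"
proof -
  show d: "subvalue_map v d S"
    using assms(2,3) by (auto simp: subvalue_map_def)
  show "subvalue_map v g (S(End := S (L (root d))))"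
    using assms(2,3) subvalue_map_root[OF d] by (auto simp: subvalue_map_def seq)
qed

lemma subvalue_map_Loop:
  assumes seq: "\<And>l a b X. v (Seq l a b) X = v a (v b X)"
    and "distinct (nodes (Loop l g))" and "subvalue_map v (Loop l g) S"
    and "fml_sem p = fml_sem (S (L l))"
  shows "subvalue_map v g (S(End := p))"
  using assms(2-) by (auto simp: subvalue_map_def seq)

lemma subvalue_map_DLoop:
  assumes seq: "\<And>l a b X. v (Seq l a b) X = v a (v b X)"
    and "distinct (nodes (DLoop l g))" and "subvalue_map v (DLoop l g) S"
    and "fml_sem p = fml_sem (S (L l))"
  shows "subvalue_map v g (S(End := p))"
  using assms(2-) by (auto simp: subvalue_map_def seq)

lemma game_sem_aproj_subset: "game_sem (aproj nl g S) Y \<subseteq> game_sem g Y"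
proof (induction g arbitrary: S Y rule: game.induct[of "\<lambda>_. True"])
  case (Seq l g d) then show ?case
    by simp (meson game_sem_mono order_trans)
next
  case (Loop l g) then show ?case
    by (auto intro!: lfp_mono)
next
  case (DLoop l g) then show ?case
    by simp (rule gfp_mono, blast)
qed (simp; blast)+

lemma game_sem_subset_aproj:
  "distinct (nodes g) \<Longrightarrow> subvalue_map game_sem g S \<Longrightarrow>
    game_sem g (Y \<inter> fml_sem (S End)) \<subseteq> game_sem (aproj nl g S) Y"
proof (induction g arbitrary: S Y rule: game.induct[of "\<lambda>_. True"])
  case (Choice l g d)
  note sub = subvalue_map_Choice[OF Choice.prems]
  have "game_sem g (Y \<inter> fml_sem (S End)) \<subseteq> fml_sem (S (L (root g)))"
    unfolding subvalue_map_root[OF sub(1)] by (rule game_sem_mono) blast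
  moreover have "game_sem d (Y \<inter> fml_sem (S End)) \<subseteq> fml_sem (S (L (root d)))"
    unfolding subvalue_map_root[OF sub(2)] by (rule game_sem_mono) blast
  ultimately show ?case
    using Choice.IH(1)[OF _ sub(1), of Y] Choice.IH(2)[OF _ sub(2), of Y] Choice.prems(1) by auto
next
  case (Seq l g d)
  let ?S = "S(End := S (L (root d)))"
  note sub = subvalue_map_Seq[OF game_sem.simps(6) Seq.prems]
  have "game_sem d (Y \<inter> fml_sem (S End)) \<subseteq> game_sem (aproj nl d S) Y \<inter> fml_sem (?S End)"
    using Seq.IH(2)[OF _ sub(2)] Seq.prems(1) subvalue_map_root[OF sub(2)]
      game_sem_mono[of "Y \<inter> fml_sem (S End)" "fml_sem (S End)" d] by auto
  then have "game_sem g (game_sem d (Y \<inter> fml_sem (S End)))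
      \<subseteq> game_sem g (game_sem (aproj nl d S) Y \<inter> fml_sem (?S End))"
    by (rule game_sem_mono)
  also have "\<dots> \<subseteq> game_sem (aproj nl g ?S) (game_sem (aproj nl d S) Y)"
    by (rule Seq.IH(1)[OF _ sub(1)]) (use Seq.prems(1) in simp)
  finally show ?case by simp
next
  case (Loop l g)
  let ?E = "fml_sem (S End)" and ?S = "S(End := S (L l))"
  have dg: "distinct (nodes g)"
    using Loop.prems(1) by simp
  have sub: "subvalue_map game_sem g ?S"
    by (rule subvalue_map_Loop[OF game_sem.simps(6) Loop.prems]) simp
  have W: "fml_sem (S (L l)) = lfp (\<lambda>Z. ?E \<union> game_sem g Z)"
    using subvalue_map_root[OF Loop.prems(2)] by simp
  have guard: "fml_sem (S (L (root g))) = game_sem g (fml_sem (S (L l)))"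
    using subvalue_map_root[OF sub] by simp
  have "game_sem g (Z \<inter> fml_sem (S (L l))) \<subseteq> game_sem (aproj nl g ?S) Z" for Z
    using Loop.IH[OF dg sub] by (simp only: fun_upd_same)
  then have "lfp (\<lambda>Z. (Y \<inter> ?E) \<union> game_sem g Z)
      \<subseteq> lfp (\<lambda>Z. (Y \<inter> ?E) \<union> (fml_sem (S (L (root g))) \<inter> game_sem (aproj nl g ?S) Z))"
    unfolding guard W by (intro lfp_mono_guarded mono_game_sem) auto
  then show ?case
    by (simp add: Int_commute)
next
  case (DChoice l g d)
  note sub = subvalue_map_DChoice[OF DChoice.prems]
  show ?case
    using DChoice.IH(1)[OF _ sub(1), of Y] DChoice.IH(2)[OF _ sub(2), of Y] DChoice.prems(1) by auto
next
  case (DLoop l g)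
  let ?E = "fml_sem (S End)" and ?S = "S(End := S (L l))"
  have dg: "distinct (nodes g)"
    using DLoop.prems(1) by simp
  have sub: "subvalue_map game_sem g ?S"
    by (rule subvalue_map_DLoop[OF game_sem.simps(6) DLoop.prems]) simp
  have W: "fml_sem (S (L l)) = gfp (\<lambda>Z. ?E \<inter> game_sem g Z)"
    using subvalue_map_root[OF DLoop.prems(2)] by simp
  have "game_sem g (Z \<inter> fml_sem (S (L l))) \<subseteq> game_sem (aproj nl g ?S) Z" for Z
    using DLoop.IH[OF dg sub] by (simp only: fun_upd_same)
  then have "gfp (\<lambda>Z. (Y \<inter> ?E) \<inter> game_sem g Z) \<subseteq> gfp (\<lambda>Z. Y \<inter> game_sem (aproj nl g ?S) Z)"
    unfolding W by (intro gfp_mono_relative[where E = ?E] mono_game_sem) auto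
  then show ?case
    by simp
qed (auto intro: game_sem_mono)

lemma game_sem_subset_dproj: "game_sem g Y \<subseteq> game_sem (dproj nl g S) Y"
proof (induction g arbitrary: S Y rule: game.induct[of "\<lambda>_. True"])
  case (Seq l g d) then show ?case
    by simp (meson game_sem_mono order_trans)
next
  case (Loop l g) then show ?case
    by simp (rule lfp_mono, blast)
next
  case (DLoop l g) then show ?case
    by (auto intro!: gfp_mono)
qed (simp; blast)+

lemma game_sem_dproj_subset:
  "distinct (nodes g) \<Longrightarrow> subvalue_map demon_sem g S \<Longrightarrow>
    game_sem (dproj nl g S) Y \<subseteq> game_sem g (Y \<union> - fml_sem (S End))"
proof (induction g arbitrary: S Y rule: game.induct[of "\<lambda>_. True"])
  case (Choice l g d)
  note sub = subvalue_map_Choice[OF Choice.prems]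
  show ?case
    using Choice.IH(1)[OF _ sub(1), of Y] Choice.IH(2)[OF _ sub(2), of Y] Choice.prems(1) by auto
next
  case (Seq l g d)
  let ?N = "- fml_sem (S End)" and ?S = "S(End := S (L (root d)))"
  note sub = subvalue_map_Seq[OF demon_sem_Seq Seq.prems]
  have root_d: "- fml_sem (?S End) = game_sem d ?N"
    using subvalue_map_root[OF sub(2)] by (simp add: demon_sem_def)
  have "game_sem (dproj nl g ?S) (game_sem (dproj nl d S) Y)
      \<subseteq> game_sem g (game_sem (dproj nl d S) Y \<union> - fml_sem (?S End))"
    by (rule Seq.IH(1)[OF _ sub(1)]) (use Seq.prems(1) in simp)
  also have "\<dots> \<subseteq> game_sem g (game_sem d (Y \<union> ?N))"
  proof (rule game_sem_mono)
    have "game_sem (dproj nl d S) Y \<subseteq> game_sem d (Y \<union> ?N)"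
      by (rule Seq.IH(2)[OF _ sub(2)]) (use Seq.prems(1) in simp)
    moreover have "game_sem d ?N \<subseteq> game_sem d (Y \<union> ?N)"
      by (rule game_sem_mono) blast
    ultimately show "game_sem (dproj nl d S) Y \<union> - fml_sem (?S End) \<subseteq> game_sem d (Y \<union> ?N)"
      unfolding root_d by blast
  qed
  finally show ?case by simp
next
  case (Loop l g)
  let ?N = "- fml_sem (S End)" and ?S = "S(End := S (L l))"
  have dg: "distinct (nodes g)"
    using Loop.prems(1) by simp
  have sub: "subvalue_map demon_sem g ?S"
    by (rule subvalue_map_Loop[OF demon_sem_Seq Loop.prems]) simp
  have W: "- fml_sem (S (L l)) = lfp (\<lambda>Z. ?N \<union> game_sem g Z)"
    using subvalue_map_root[OF Loop.prems(2)] by (simp add: demon_sem_def)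
  have "game_sem (dproj nl g ?S) Z \<subseteq> game_sem g (Z \<union> - fml_sem (S (L l)))" for Z
    using Loop.IH[OF dg sub] by (simp only: fun_upd_same)
  then have "lfp (\<lambda>Z. Y \<union> game_sem (dproj nl g ?S) Z) \<subseteq> lfp (\<lambda>Z. (Y \<union> ?N) \<union> game_sem g Z)"
    unfolding W by (intro lfp_mono_relative[where N = ?N] mono_game_sem) auto
  then show ?case
    by simp
next
  case (DChoice l g d)
  let ?N = "- fml_sem (S End)"
  note sub = subvalue_map_DChoice[OF DChoice.prems]
  have "- fml_sem (S (L (root g))) \<subseteq> game_sem g (Y \<union> ?N)"
    unfolding subvalue_map_root[OF sub(1)] demon_sem_def by (simp add: game_sem_mono)
  moreover have "- fml_sem (S (L (root d))) \<subseteq> game_sem d (Y \<union> ?N)"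
    unfolding subvalue_map_root[OF sub(2)] demon_sem_def by (simp add: game_sem_mono)
  ultimately show ?case
    using DChoice.IH(1)[OF _ sub(1), of Y] DChoice.IH(2)[OF _ sub(2), of Y] DChoice.prems(1)
    by auto
next
  case (DLoop l g)
  let ?N = "- fml_sem (S End)" and ?S = "S(End := Or (S (L (root g))) (S End))"
  have dg: "distinct (nodes g)"
    using DLoop.prems(1) by simp
  have W: "- fml_sem (S (L l)) = gfp (\<lambda>Z. ?N \<inter> game_sem g Z)"
    using subvalue_map_root[OF DLoop.prems(2)] by (simp add: demon_sem_def)
  have guard: "- fml_sem (S (L (root g))) = game_sem g (- fml_sem (S (L l)))"
    using DLoop.prems root_in_nodes[of g]
    by (auto simp: subvalue_map_def suffix_root demon_sem_def)
  (* One unfolding of the gfp: S(g) \<or> S(end) denotes the loop's own value S(a). *)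
  have "- fml_sem (S (L l)) = ?N \<inter> game_sem g (- fml_sem (S (L l)))"
    unfolding W by (rule gfp_unfold) (auto intro!: monoI dest: game_sem_mono)
  with guard have end_eq: "fml_sem (Or (S (L (root g))) (S End)) = fml_sem (S (L l))"
    by auto
  then have sub: "subvalue_map demon_sem g ?S"
    by (intro subvalue_map_DLoop[OF demon_sem_Seq DLoop.prems])
  have "game_sem (dproj nl g ?S) Z \<subseteq> game_sem g (Z \<union> - fml_sem (S (L l)))" for Z
    using DLoop.IH[OF dg sub, of Z] unfolding fun_upd_same end_eq .
  then have "gfp (\<lambda>Z. (Y \<union> ?N) \<inter> (game_sem g (- fml_sem (S (L l))) \<union> game_sem (dproj nl g ?S) Z))
      \<subseteq> gfp (\<lambda>Z. (Y \<union> ?N) \<inter> game_sem g Z)"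
    unfolding W by (intro gfp_mono_guarded[where N = ?N] mono_game_sem) auto
  then show ?case
    by (simp add: guard[symmetric] Un_commute)
qed (auto intro: game_sem_mono)

lemma subvalue_map_angel_mp: "subvalue_map game_sem a (angel_mp a p)"
  by (simp add: subvalue_map_def)

lemma subvalue_map_demon_mp: "subvalue_map demon_sem a (demon_mp a p)"
  by (simp add: subvalue_map_def fml_sem_Box)

lemma game_sem_aproj_angel_mp:
  assumes "distinct (nodes a)"
  shows "game_sem (aproj nl a (angel_mp a p)) (fml_sem p) = game_sem a (fml_sem p)"
proof (rule subset_antisym)
  show "game_sem a (fml_sem p) \<subseteq> game_sem (aproj nl a (angel_mp a p)) (fml_sem p)"
    using game_sem_subset_aproj[OF assms subvalue_map_angel_mp[of a p], where Y = "fml_sem p"]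
    by simp
qed (rule game_sem_aproj_subset)

lemma demon_sem_dproj_demon_mp:
  assumes "distinct (nodes a)"
  shows "demon_sem (dproj nl a (demon_mp a p)) (fml_sem p) = demon_sem a (fml_sem p)"
proof -
  have "game_sem (dproj nl a (demon_mp a p)) (- fml_sem p) \<subseteq> game_sem a (- fml_sem p)"
    using game_sem_dproj_subset[OF assms subvalue_map_demon_mp[of a p], where Y = "- fml_sem p"]
    by simp
  with game_sem_subset_dproj[of a "- fml_sem p"] show ?thesis
    by (simp add: demon_sem_def subset_antisym)
qed

lemma valid_Iff: "valid (Iff p q) \<longleftrightarrow> fml_sem p = fml_sem q"
  by (auto simp: valid_def)

theorem mainTheorem6:
  fixes \<alpha> :: game and \<phi> :: fml and nl :: "lab \<Rightarrow> nat \<Rightarrow> lab"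
  assumes unique_labels: "distinct (nodes \<alpha>)"
    and fresh_inj: "inj (\<lambda>(a, k). nl a k)"
    and fresh_new: "\<forall>a k. nl a k \<notin> set (nodes \<alpha>)"
  shows "valid (Iff (Dia (aproj nl \<alpha> (angel_mp \<alpha> \<phi>)) \<phi>) (Dia \<alpha> \<phi>))
       \<and> valid (Iff (Box (dproj nl \<alpha> (demon_mp \<alpha> \<phi>)) \<phi>) (Box \<alpha> \<phi>))"
  using game_sem_aproj_angel_mp[OF unique_labels] demon_sem_dproj_demon_mp[OF unique_labels]
  by (simp add: valid_Iff fml_sem_Box)

end
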